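(* For every $h\in\mathcal H$, $T_h:A_h\to\mathcal Y_h$ is a bijection with inverse $S_h$. Moreover: (i) $1-h^\top y>0$ for every $y\in\mathcal Y_h$ (so $S_h$ is well defined on $\mathcal Y_h$); (ii) $S_h(\mathcal Y_h)\subseteq\mathcal X_d$ and $T_h(A_h)\subseteq\mathcal Y_h$; (iii) if $h$ lies in the interior of $\mathcal H$, then $A_h=\mathcal X_d$; (iv) if $h$ lies in the boundary of $\mathcal H$, then $\mathcal Y_h$ is unbounded.
   Context: Fix an integer $d\ge 2$. Let $H\in\mathbb R^{d\times(d-1)}$ have orthonormal columns spanning $T_d:=\{u\in\mathbb R^d:\mathbf 1^\top u=0\}$, and set $\gamma_i:=H^\top e_i\in\mathbb R^{d-1}$ ($i=1,\dots,d$); then $\sum_i\gamma_i=0$ and $\gamma_i^\top\gamma_j=\delta_{ij}-1/d$. Let $\mathcal X_d:=\{x\in\mathbb R^{d-1}:1+\gamma_i^\top x\ge0\ \forall i\}$ and $\mathcal H:=\mathrm{conv}\{\gamma_1,\dots,\gamma_d\}$. For $h\in\mathcal H$ define $A_h:=\{x\in\mathcal X_d:1+h^\top x>0\}$, $\mathcal Y_h:=\{y\in\mathbb R^{d-1}:1+(\gamma_i-h)^\top y\ge 0\ \forall i\}$, $T_h(x):=x/(1+h^\top x)$ for $x\in A_h$, and $S_h(y):=y/(1-h^\top y)$ for $y\in\mathcal Y_h$. *)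

theory Defs
  imports "HOL-Analysis.Analysis"
begin

text \<open>Index type 'n has d elements (coordinates of R^d); type 'm has d-1 elements.
  H is a d x (d-1) real matrix.\<close>

definition gam :: "real^'m^'n \<Rightarrow> 'n \<Rightarrow> real^'m" where
  "gam H i = transpose H *v axis i 1"

definition Xd :: "real^'m^'n \<Rightarrow> (real^'m) set" where
  "Xd H = {x. \<forall>i. 1 + gam H i \<bullet> x \<ge> 0}"

definition HH :: "real^'m^'n \<Rightarrow> (real^'m) set" where
  "HH H = convex hull (range (gam H))"

definition Ah :: "real^'m^'n \<Rightarrow> real^'m \<Rightarrow> (real^'m) set" where
  "Ah H h = {x \<in> Xd H. 1 + h \<bullet> x > 0}"

definition Yh :: "real^'m^'n \<Rightarrow> real^'m \<Rightarrow> (real^'m) set" where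
  "Yh H h = {y. \<forall>i. 1 + (gam H i - h) \<bullet> y \<ge> 0}"

definition Th :: "real^'m \<Rightarrow> real^'m \<Rightarrow> real^'m" where
  "Th h x = (1 / (1 + h \<bullet> x)) *\<^sub>R x"

definition Sh :: "real^'m \<Rightarrow> real^'m \<Rightarrow> real^'m" where
  "Sh h y = (1 / (1 - h \<bullet> y)) *\<^sub>R y"

end

theory Submission
  imports Defs
begin

text \<open>The maps \<open>T\<^sub>h\<close> and \<open>S\<^sub>h\<close> are mutually inverse, and the identity
  \<open>1 + (\<gamma>\<^sub>i - h)\<bullet>T\<^sub>h x = (1 + \<gamma>\<^sub>i\<bullet>x) / (1 + h\<bullet>x)\<close> transports the inequalities
  defining \<open>\<X>\<^sub>d\<close> to those defining \<open>\<Y>\<^sub>h\<close>, and back via \<open>S\<^sub>h\<close>. That \<open>1 - h\<bullet>y > 0\<close>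
  on \<open>\<Y>\<^sub>h\<close> follows by summing its \<open>d\<close> inequalities: since \<open>\<Sum>\<^sub>i \<gamma>\<^sub>i = 0\<close> the sum is
  \<open>d (1 - h\<bullet>y)\<close>, and it vanishes only if every \<open>\<gamma>\<^sub>i\<bullet>y\<close> does, i.e. \<open>y = 0\<close>.
  Every \<open>x \<in> \<X>\<^sub>d\<close> satisfies \<open>1 + z\<bullet>x \<ge> 0\<close> on the convex hull \<open>\<H>\<close>, strictly so in its
  interior; at a boundary point \<open>h\<close> a supporting hyperplane with normal \<open>a\<close> gives
  the ray \<open>{t a | t \<ge> 0}\<close> inside \<open>\<Y>\<^sub>h\<close>.\<close>

lemma gam_eq_row: "gam H i = H $ i"
  unfolding gam_def
  by (simp add: vec_eq_iff matrix_vector_mult_def transpose_def axis_def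
        if_distrib cong: if_cong)

lemma sum_gam_eq_0:
  assumes "\<And>k. (\<Sum>i\<in>UNIV. H $ i $ k) = 0"
  shows "(\<Sum>i\<in>UNIV. gam H i) = 0"
  using assms by (simp add: gam_eq_row vec_eq_iff sum_component)

lemma column_sums_eq_0:
  assumes "span (columns H) = {u :: real^'n. (\<Sum>i\<in>UNIV. u $ i) = 0}"
  shows "(\<Sum>i\<in>UNIV. H $ i $ k) = 0"
proof -
  have "column k H \<in> span (columns H)"
    by (intro span_base) (auto simp: columns_def)
  then show ?thesis
    using assms by (simp add: column_def)
qed

lemma gam_inner_eq_0_imp_eq_0:
  assumes "transpose H ** H = mat 1" and "\<And>i. gam H i \<bullet> y = 0"
  shows "y = 0"
proof -
  have "H *v y = 0"
    using assms(2) by (simp add: gam_eq_row inner_vec_def matrix_vector_mult_def vec_eq_iff)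
  then have "transpose H *v (H *v y) = 0"
    by simp
  then show ?thesis
    using assms(1) by (simp add: matrix_vector_mul_assoc)
qed

lemma Yh_one_minus_inner_pos:
  fixes H :: "real^'m^'n"
  assumes sum0: "(\<Sum>i\<in>UNIV. gam H i) = 0"
    and inj: "\<And>y. (\<And>i. gam H i \<bullet> y = 0) \<Longrightarrow> y = 0"
    and y: "y \<in> Yh H h"
  shows "0 < 1 - h \<bullet> y"
proof -
  define c where "c i = 1 + (gam H i - h) \<bullet> y" for i
  have c_nonneg: "0 \<le> c i" for i
    using y by (simp add: Yh_def c_def)
  have "(\<Sum>i\<in>UNIV. c i) = real CARD('n) * (1 - h \<bullet> y) + (\<Sum>i\<in>UNIV. gam H i) \<bullet> y"
    by (simp add: c_def inner_sum_left sum.distrib sum_subtractf algebra_simps)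
  then have sum_c: "(\<Sum>i\<in>UNIV. c i) = real CARD('n) * (1 - h \<bullet> y)"
    using sum0 by simp
  then have "0 \<le> 1 - h \<bullet> y"
    using sum_nonneg[of UNIV c] c_nonneg by (simp add: zero_le_mult_iff)
  moreover have "1 - h \<bullet> y \<noteq> 0"
  proof
    assume h1: "1 - h \<bullet> y = 0"
    then have "c i = 0" for i
      using sum_c sum_nonneg_eq_0_iff[of UNIV c] c_nonneg by simp
    then have "y = 0"
      using h1 by (intro inj) (simp add: c_def inner_diff_left)
    with h1 show False
      by simp
  qed
  ultimately show ?thesis
    by simp
qed

lemma Sh_Th: "1 + h \<bullet> x \<noteq> 0 \<Longrightarrow> Sh h (Th h x) = x"
  by (simp add: Sh_def Th_def field_simps)

lemma Th_Sh: "1 - h \<bullet> y \<noteq> 0 \<Longrightarrow> Th h (Sh h y) = y"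
  by (simp add: Sh_def Th_def field_simps)

lemma inner_Th: "1 + h \<bullet> x \<noteq> 0 \<Longrightarrow> 1 + (g - h) \<bullet> Th h x = (1 + g \<bullet> x) / (1 + h \<bullet> x)"
  by (simp add: Th_def inner_diff_left field_simps)

lemma inner_Sh: "1 - h \<bullet> y \<noteq> 0 \<Longrightarrow> 1 + g \<bullet> Sh h y = (1 + (g - h) \<bullet> y) / (1 - h \<bullet> y)"
  by (simp add: Sh_def inner_diff_left field_simps)

lemma Th_in_Yh: "x \<in> Ah H h \<Longrightarrow> Th h x \<in> Yh H h"
  by (simp add: Ah_def Xd_def Yh_def inner_Th)

lemma Sh_in_Ah: "y \<in> Yh H h \<Longrightarrow> 0 < 1 - h \<bullet> y \<Longrightarrow> Sh h y \<in> Ah H h"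
  using inner_Sh[of h y h] by (simp add: Ah_def Xd_def Yh_def inner_Sh)

lemma bij_betw_Th:
  assumes "\<And>y. y \<in> Yh H h \<Longrightarrow> 0 < 1 - h \<bullet> y"
  shows "bij_betw (Th h) (Ah H h) (Yh H h)"
proof (rule bij_betw_byWitness[where f' = "Sh h"])
  show "\<forall>x\<in>Ah H h. Sh h (Th h x) = x"
    by (simp add: Ah_def Sh_Th)
  show "\<forall>y\<in>Yh H h. Th h (Sh h y) = y"
    using assms Th_Sh by (metis order_less_irrefl)
  show "Th h ` Ah H h \<subseteq> Yh H h"
    using Th_in_Yh by blast
  show "Sh h ` Yh H h \<subseteq> Ah H h"
    using Sh_in_Ah assms by blast
qed

lemma Xd_inner_nonneg_HH:
  assumes "x \<in> Xd H" and "z \<in> HH H"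
  shows "0 \<le> 1 + z \<bullet> x"
proof -
  have "HH H \<subseteq> {z. - 1 \<le> x \<bullet> z}"
    unfolding HH_def
  proof (rule hull_minimal)
    show "range (gam H) \<subseteq> {z. - 1 \<le> x \<bullet> z}"
    proof clarify
      fix i
      have "0 \<le> 1 + gam H i \<bullet> x"
        using assms(1) by (simp add: Xd_def)
      then show "- 1 \<le> x \<bullet> gam H i"
        by (simp add: inner_commute)
    qed
  qed (rule convex_halfspace_ge)
  then show ?thesis
    using assms(2) by (auto simp: inner_commute)
qed

lemma interior_inner_pos:
  fixes x :: "'a::real_inner"
  assumes nonneg: "\<And>z. z \<in> S \<Longrightarrow> 0 \<le> 1 + z \<bullet> x" and h: "h \<in> interior S"
  shows "0 < 1 + h \<bullet> x"
proof (cases "x = 0")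
  case False
  obtain e where "0 < e" and ball: "ball h e \<subseteq> S"
    using h by (meson mem_interior)
  define z where "z = h - (e / (2 * norm x)) *\<^sub>R x"
  have "dist h z = e / 2"
    using False \<open>0 < e\<close> by (simp add: z_def dist_norm)
  then have "z \<in> S"
    using ball \<open>0 < e\<close> by auto
  moreover have "1 + z \<bullet> x = 1 + h \<bullet> x - e * norm x / 2"
    using False by (simp add: z_def inner_diff_left dot_square_norm power2_eq_square)
  ultimately have "e * norm x / 2 \<le> 1 + h \<bullet> x"
    using nonneg by fastforce
  moreover have "0 < e * norm x / 2"
    using False \<open>0 < e\<close> by simp
  ultimately show ?thesis
    by linarith
qed simp

lemma Ah_eq_Xd_if_interior:
  assumes "h \<in> interior (HH H)"
  shows "Ah H h = Xd H"
proof -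
  have "0 < 1 + h \<bullet> x" if "x \<in> Xd H" for x
    using interior_inner_pos[OF Xd_inner_nonneg_HH[OF that] assms] .
  then show ?thesis
    by (auto simp: Ah_def)
qed

lemma supporting_hyperplane_not_interior:
  fixes S :: "'a::euclidean_space set"
  assumes "convex S" and "x \<in> S" and "x \<notin> interior S"
  obtains a where "a \<noteq> 0" and "\<And>y. y \<in> S \<Longrightarrow> a \<bullet> x \<le> a \<bullet> y"
proof (cases "interior S = {}")
  case True
  then obtain a b where "a \<noteq> 0" and hyperplane: "S \<subseteq> {y. a \<bullet> y = b}"
    using empty_interior_subset_hyperplane[OF assms(1)] by metis
  show ?thesis
  proof (rule that[OF \<open>a \<noteq> 0\<close>])
    fix y
    assume "y \<in> S"
    then have "a \<bullet> x = b" and "a \<bullet> y = b"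
      using hyperplane assms(2) by auto
    then show "a \<bullet> x \<le> a \<bullet> y"
      by simp
  qed
next
  case False
  then have "x \<notin> rel_interior S"
    using assms(3) by (simp add: rel_interior_nonempty_interior)
  moreover have "x \<in> closure S"
    using assms(2) closure_subset by blast
  ultimately obtain a where "a \<noteq> 0" and supp: "\<And>y. y \<in> closure S \<Longrightarrow> a \<bullet> x \<le> a \<bullet> y"
    using supporting_hyperplane_relative_frontier[OF assms(1)] by metis
  show ?thesis
  proof (rule that[OF \<open>a \<noteq> 0\<close>])
    fix y
    assume "y \<in> S"
    then show "a \<bullet> x \<le> a \<bullet> y"
      using supp closure_subset by blast
  qed
qed

lemma ray_not_bounded:
  fixes a :: "'a::real_normed_vector"
  assumes "a \<noteq> 0" and "\<And>t. 0 \<le> t \<Longrightarrow> t *\<^sub>R a \<in> S"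
  shows "\<not> bounded S"
proof
  assume "bounded S"
  then obtain B where B: "\<And>y. y \<in> S \<Longrightarrow> norm y \<le> B"
    by (meson bounded_iff)
  define t where "t = (\<bar>B\<bar> + 1) / norm a"
  have "0 \<le> t"
    by (simp add: t_def)
  moreover have "norm (t *\<^sub>R a) = \<bar>B\<bar> + 1"
    using assms(1) by (simp add: t_def)
  ultimately show False
    using B assms(2) by force
qed

lemma Yh_not_bounded_if_frontier:
  assumes "h \<in> frontier (HH H)"
  shows "\<not> bounded (Yh H h)"
proof -
  have "compact (HH H)"
    unfolding HH_def by (simp add: compact_convex_hull finite_imp_compact)
  then have "h \<in> HH H"
    using assms frontier_subset_closed compact_imp_closed by blast
  moreover have "h \<notin> interior (HH H)"
    using assms by (simp add: frontier_def)
  ultimately obtain a where "a \<noteq> 0" and supp: "\<And>z. z \<in> HH H \<Longrightarrow> a \<bullet> h \<le> a \<bullet> z"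
    using supporting_hyperplane_not_interior[of "HH H"] by (auto simp: HH_def)
  have "t *\<^sub>R a \<in> Yh H h" if "0 \<le> t" for t
  proof -
    have "0 \<le> (gam H i - h) \<bullet> a" for i
      using supp[of "gam H i"] by (simp add: HH_def hull_inc inner_diff_right inner_commute)
    then show ?thesis
      using that by (simp add: Yh_def)
  qed
  with \<open>a \<noteq> 0\<close> show ?thesis
    by (rule ray_not_bounded)
qed

theorem proposition3p2:
  fixes H :: "real^'m^'n" and h :: "real^'m"
  assumes d: "CARD('n) \<ge> 2" and dm: "CARD('m) + 1 = CARD('n)"
    and orth: "transpose H ** H = mat 1"
    and span: "span (columns H) = {u :: real^'n. (\<Sum>i\<in>UNIV. u $ i) = 0}"
    and hH: "h \<in> HH H"
  shows "bij_betw (Th h) (Ah H h) (Yh H h)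
    \<and> (\<forall>x\<in>Ah H h. Sh h (Th h x) = x)
    \<and> (\<forall>y\<in>Yh H h. Th h (Sh h y) = y)
    \<and> (\<forall>y\<in>Yh H h. 1 - h \<bullet> y > 0)
    \<and> Sh h ` Yh H h \<subseteq> Xd H
    \<and> Th h ` Ah H h \<subseteq> Yh H h
    \<and> (h \<in> interior (HH H) \<longrightarrow> Ah H h = Xd H)
    \<and> (h \<in> frontier (HH H) \<longrightarrow> \<not> bounded (Yh H h))"
proof -
  have pos: "\<forall>y\<in>Yh H h. 1 - h \<bullet> y > 0"
    using Yh_one_minus_inner_pos[OF sum_gam_eq_0[OF column_sums_eq_0[OF span]]]
      gam_inner_eq_0_imp_eq_0[OF orth] by blast
  show ?thesis
  proof (intro conjI)
    show "bij_betw (Th h) (Ah H h) (Yh H h)"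
      using pos by (intro bij_betw_Th) blast
    show "\<forall>x\<in>Ah H h. Sh h (Th h x) = x"
      by (simp add: Ah_def Sh_Th)
    show "\<forall>y\<in>Yh H h. Th h (Sh h y) = y"
      using pos Th_Sh by (metis order_less_irrefl)
    show "Sh h ` Yh H h \<subseteq> Xd H"
      using pos Sh_in_Ah by (auto simp: Ah_def)
    show "Th h ` Ah H h \<subseteq> Yh H h"
      using Th_in_Yh by blast
    show "\<forall>y\<in>Yh H h. 1 - h \<bullet> y > 0"
      by (rule pos)
    show "h \<in> interior (HH H) \<longrightarrow> Ah H h = Xd H"
      using Ah_eq_Xd_if_interior by blast
    show "h \<in> frontier (HH H) \<longrightarrow> \<not> bounded (Yh H h)"
      using Yh_not_bounded_if_frontier by blast
  qed
qed

end
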